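(* Let $M$ be a graded generalized Eulerian $A_1(K)$-module. Then $H_0(X_1;M)=M/X_1M$ and $H_1(X_1;M)=\ker(X_1\colon M(-1)\to M)$ are graded $K$-vector spaces concentrated in degree $0$.
   Context: $K$ is a field of characteristic zero; $A_1(K)=K\langle X_1,\partial_1\rangle$ with $\partial_1X_1-X_1\partial_1=1$, graded by $\deg X_1=1$, $\deg\partial_1=-1$. A graded $A_1(K)$-module $M$ is generalized Eulerian if for every homogeneous $z\in M$ of degree $|z|$ there is $a\ge1$ with $(X_1\partial_1-|z|)^az=0$. $M(l)_j=M_{j+l}$. *)

theory Defs
  imports Complex_Main
begin

text \<open>A graded module over the first Weyl algebra A_1(K) = K<X_1, d_1>, d_1 X_1 - X_1 d_1 = 1,
  with deg X_1 = 1, deg d_1 = -1.  The module is the type 'm, a K-vector space via smul;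
  X and D are the actions of X_1 and d_1; Mg j is the degree-j component.\<close>

definition graded_A1_module ::
  "('k::field \<Rightarrow> 'm::ab_group_add \<Rightarrow> 'm) \<Rightarrow> ('m \<Rightarrow> 'm) \<Rightarrow> ('m \<Rightarrow> 'm) \<Rightarrow> (int \<Rightarrow> 'm set) \<Rightarrow> bool"
where
  "graded_A1_module smul X D Mg \<longleftrightarrow>
     vector_space smul \<and>
     Vector_Spaces.linear smul smul X \<and> Vector_Spaces.linear smul smul D \<and>
     (\<forall>m. D (X m) - X (D m) = m) \<and>
     (\<forall>j. module.subspace smul (Mg j)) \<and>
     (\<forall>j. X ` Mg j \<subseteq> Mg (j + 1)) \<and>
     (\<forall>j. D ` Mg j \<subseteq> Mg (j - 1)) \<and>
     (\<forall>m. \<exists>S f. finite S \<and> (\<forall>j\<in>S. f j \<in> Mg j) \<and> m = sum f S) \<and>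
     (\<forall>S f. finite S \<and> (\<forall>j\<in>S. f j \<in> Mg j) \<and> sum f S = 0 \<longrightarrow> (\<forall>j\<in>S. f j = 0))"

definition gen_eulerian ::
  "('k::field \<Rightarrow> 'm::ab_group_add \<Rightarrow> 'm) \<Rightarrow> ('m \<Rightarrow> 'm) \<Rightarrow> ('m \<Rightarrow> 'm) \<Rightarrow> (int \<Rightarrow> 'm set) \<Rightarrow> bool"
where
  "gen_eulerian smul X D Mg \<longleftrightarrow>
     (\<forall>j. \<forall>z\<in>Mg j. \<exists>a::nat. a \<ge> 1 \<and> ((\<lambda>m. X (D m) - smul (of_int j) m) ^^ a) z = 0)"

definition shift :: "(int \<Rightarrow> 'm set) \<Rightarrow> int \<Rightarrow> int \<Rightarrow> 'm set" where
  "shift Mg l j = Mg (j + l)"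

text \<open>Degree-j component of H_0(X_1;M) = M/X_1 M vanishes: M_j \<subseteq> (X_1 M)_j = X_1 M_{j-1}.\<close>
definition H0_vanishes_in_degree ::
  "('m::ab_group_add \<Rightarrow> 'm) \<Rightarrow> (int \<Rightarrow> 'm set) \<Rightarrow> int \<Rightarrow> bool" where
  "H0_vanishes_in_degree X Mg j \<longleftrightarrow> Mg j \<subseteq> X ` (Mg (j - 1))"

definition H1_component :: "('m::ab_group_add \<Rightarrow> 'm) \<Rightarrow> (int \<Rightarrow> 'm set) \<Rightarrow> int \<Rightarrow> 'm set" where
  "H1_component X Mg j = {z \<in> shift Mg (-1) j. X z = 0}"

end

theory Submission
  imports Defs
begin

text \<open>Let E = X_1 d_1. If z has degree j \<noteq> 0 and (E - j)^a z = 0, induction on a shows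
  z \<in> X_1 M_{j-1}: once (E - j) z lies there, so does j z = E z - (E - j) z.
  If instead X_1 z = 0, the commutation relation gives E z = -z, so E - (j - 1) acts on z as
  the invertible scalar -j and no power of it kills z \<noteq> 0.\<close>

lemma funpow_eq_zero_imp_mem:
  assumes "z \<in> T" "(f ^^ a) z = 0" "0 \<in> S"
    and "\<And>z. z \<in> T \<Longrightarrow> f z \<in> T"
    and "\<And>z. z \<in> T \<Longrightarrow> f z \<in> S \<Longrightarrow> z \<in> S"
  shows "z \<in> S"
  using assms(1,2)
proof (induction a arbitrary: z)
  case 0
  then show ?case using assms(3) by simp
next
  case (Suc a)
  have "(f ^^ a) (f z) = 0"
    using Suc.prems(2) by (simp add: funpow_Suc_right del: funpow.simps)
  then show ?case using Suc assms(4,5) by blast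
qed

lemma (in module) funpow_scale_eigenvector:
  assumes "\<And>c. g (scale c z) = scale (c * \<mu>) z"
  shows "(g ^^ n) z = scale (\<mu> ^ n) z"
proof (induction n)
  case 0
  then show ?case by simp
next
  case (Suc n)
  then show ?case using assms by (simp add: mult.commute)
qed

locale graded_A1 =
  fixes smul :: "'k::field \<Rightarrow> 'm::ab_group_add \<Rightarrow> 'm"
    and X D :: "'m \<Rightarrow> 'm"
    and Mg :: "int \<Rightarrow> 'm set"
  assumes graded: "graded_A1_module smul X D Mg"
begin

lemma vector_space: "vector_space smul"
  and linear_X: "Vector_Spaces.linear smul smul X"
  and linear_D: "Vector_Spaces.linear smul smul D"
  and commutation: "D (X m) - X (D m) = m"
  and subspace_component: "module.subspace smul (Mg j)"
  and X_component: "X ` Mg j \<subseteq> Mg (j + 1)"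
  and D_component: "D ` Mg j \<subseteq> Mg (j - 1)"
  using graded unfolding graded_A1_module_def by auto

sublocale vector_space smul
  by (rule vector_space)

sublocale X: module_hom smul smul X
  using linear_X linear_iff_module_hom by blast

sublocale D: module_hom smul smul D
  using linear_D linear_iff_module_hom by blast

definition euler_shift :: "int \<Rightarrow> 'm \<Rightarrow> 'm" where
  "euler_shift j m = X (D m) - smul (of_int j) m"

lemma euler_shift_component:
  assumes "z \<in> Mg j"
  shows "euler_shift j z \<in> Mg j"
proof -
  have "X (D z) \<in> Mg j"
    using assms D_component X_component[of "j - 1"] by fastforce
  then show ?thesis
    unfolding euler_shift_def
    by (intro subspace_diff subspace_scale subspace_component assms)
qed

lemma mem_image_X_if_euler_shift_mem:
  assumes "of_int j \<noteq> (0::'k)" "z \<in> Mg j" "euler_shift j z \<in> X ` Mg (j - 1)"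
  shows "z \<in> X ` Mg (j - 1)"
proof -
  have subspace: "subspace (X ` Mg (j - 1))"
    using X.subspace_image subspace_component by blast
  have "X (D z) \<in> X ` Mg (j - 1)"
    using D_component assms(2) by blast
  moreover have "smul (of_int j) z = X (D z) - euler_shift j z"
    unfolding euler_shift_def by simp
  ultimately have "smul (of_int j) z \<in> X ` Mg (j - 1)"
    using subspace_diff[OF subspace] assms(3) by metis
  then have "smul (inverse (of_int j)) (smul (of_int j) z) \<in> X ` Mg (j - 1)"
    using subspace_scale[OF subspace] by blast
  then show ?thesis using assms(1) by simp
qed

lemma mem_image_X_if_euler_shift_nilpotent:
  assumes "of_int j \<noteq> (0::'k)" "z \<in> Mg j" "(euler_shift j ^^ a) z = 0"
  shows "z \<in> X ` Mg (j - 1)"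
  using assms(2,3)
proof (rule funpow_eq_zero_imp_mem)
  show "0 \<in> X ` Mg (j - 1)"
    using subspace_0[OF subspace_component] X.zero by (metis image_eqI)
qed (use euler_shift_component mem_image_X_if_euler_shift_mem assms(1) in auto)

lemma funpow_euler_shift_of_X_eq_zero:
  assumes "X z = 0"
  shows "(euler_shift i ^^ n) z = smul ((- of_int (i + 1)) ^ n) z"
proof (rule funpow_scale_eigenvector)
  fix c
  have "X (D z) = - z"
    using commutation[of z] assms D.zero by (simp add: minus_equation_iff)
  then show "euler_shift i (smul c z) = smul (c * - of_int (i + 1)) z"
    unfolding euler_shift_def by (simp add: X.scale D.scale algebra_simps)
qed

lemma eq_zero_if_X_eq_zero_euler_shift_nilpotent:
  assumes "of_int j \<noteq> (0::'k)" "X z = 0" "(euler_shift (j - 1) ^^ a) z = 0"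
  shows "z = 0"
  using assms funpow_euler_shift_of_X_eq_zero[where i = "j - 1"] by simp

end

theorem mainTheorem10:
  fixes smul :: "'k::field_char_0 \<Rightarrow> 'm::ab_group_add \<Rightarrow> 'm"
    and X D :: "'m \<Rightarrow> 'm"
    and Mg :: "int \<Rightarrow> 'm set"
  assumes "graded_A1_module smul X D Mg"
    and "gen_eulerian smul X D Mg"
  shows "\<forall>j::int. j \<noteq> 0 \<longrightarrow> H0_vanishes_in_degree X Mg j \<and> H1_component X Mg j = {0}"
proof (intro allI impI conjI)
  interpret graded_A1 smul X D Mg by (rule graded_A1.intro) fact
  have nilpotent: "\<exists>a. (euler_shift j ^^ a) z = 0" if "z \<in> Mg j" for j z
    using assms(2) that unfolding gen_eulerian_def euler_shift_def[abs_def] by blast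
  fix j :: int
  assume "j \<noteq> 0"
  then have j: "of_int j \<noteq> (0::'k)" by simp
  show "H0_vanishes_in_degree X Mg j"
    unfolding H0_vanishes_in_degree_def
    using nilpotent mem_image_X_if_euler_shift_nilpotent[OF j] by blast
  show "H1_component X Mg j = {0}"
    unfolding H1_component_def shift_def
    using nilpotent eq_zero_if_X_eq_zero_euler_shift_nilpotent[OF j]
      subspace_0[OF subspace_component] X.zero by fastforce
qed

end
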